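(* Let $A\in \mathbb{Z}^{m\times n}$, $b\in \mathbb{Z}^m$, and $P:=\{x\in\mathbb{R}^n:Ax\leq b\}$. For a nonempty face $F$ of $P$, denote by $A_Fx\leq b_F$ the subsystem of $Ax\leq b$ consisting of the implicit equalities of $F$, i.e. those inequalities $a_i^\top x\le b_i$ of $Ax\le b$ with $a_i^\top x=b_i$ for all $x\in F$. Then for every prime $p$ the following are equivalent: (1) $Ax\leq b$ is totally dual $p$-adic; (2) for every nonempty face $F$ of $P$, the rows of $A_F$ form a $p$-adic generating set for a cone; (3) for every nonempty face $F$ of $P$, the rows of $A_F$ form a $p$-adic generating set for a subspace.
   Context: Let $p$ be a prime. A $p$-adic rational is a number of the form $a/p^k$ with $a,k$ integers and $k\ge 0$; a vector is $p$-adic if all its entries are $p$-adic rationals. A system $Ax\le b$ with $A\in\mathbb{Z}^{m\times n}$, $b\in\mathbb{Z}^m$ is totally dual $p$-adic if for every $w\in\mathbb{Z}^n$ for which $\min\{b^\top y: A^\top y=w,\ y\ge \mathbf{0}\}$ has an optimal solution, it has a $p$-adic optimal solution. A finite set $\{a^1,\dots,a^n\}\subseteq\mathbb{Z}^m$ is a $p$-adic generating set for a cone if every integral vector in its conic hull is a conic combination of $a^1,\dots,a^n$ with $p$-adic coefficients; it is a $p$-adic generating set for a subspace if every integral vector in its linear hull is a linear combination of $a^1,\dots,a^n$ with $p$-adic coefficients. *)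

theory Defs
  imports "HOL-Analysis.Analysis"
begin

definition rowR :: "int^'n^'m \<Rightarrow> 'm \<Rightarrow> real^'n" where
  "rowR A i = (\<chi> j. real_of_int (A $ i $ j))"

definition polyP :: "int^'n^'m \<Rightarrow> int^'m \<Rightarrow> (real^'n) set" where
  "polyP A b = {x. \<forall>i. rowR A i \<bullet> x \<le> real_of_int (b $ i)}"

definition implicit_eqs :: "int^'n^'m \<Rightarrow> int^'m \<Rightarrow> (real^'n) set \<Rightarrow> 'm set" where
  "implicit_eqs A b F = {i. \<forall>x\<in>F. rowR A i \<bullet> x = real_of_int (b $ i)}"

definition padic_rat :: "nat \<Rightarrow> real \<Rightarrow> bool" where
  "padic_rat p q \<longleftrightarrow> (\<exists>a::int. \<exists>k::nat. q = real_of_int a / real p ^ k)"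

definition padic_vec :: "nat \<Rightarrow> real^'k \<Rightarrow> bool" where
  "padic_vec p v \<longleftrightarrow> (\<forall>i. padic_rat p (v $ i))"

definition integral_vec :: "real^'k \<Rightarrow> bool" where
  "integral_vec v \<longleftrightarrow> (\<forall>i. v $ i \<in> \<int>)"

definition dual_feasible :: "int^'n^'m \<Rightarrow> int^'n \<Rightarrow> real^'m \<Rightarrow> bool" where
  "dual_feasible A w y \<longleftrightarrow> (\<forall>i. y $ i \<ge> 0) \<and>
     (\<Sum>i\<in>UNIV. y $ i *\<^sub>R rowR A i) = (\<chi> j. real_of_int (w $ j))"

definition dual_optimal :: "int^'n^'m \<Rightarrow> int^'m \<Rightarrow> int^'n \<Rightarrow> real^'m \<Rightarrow> bool" where
  "dual_optimal A b w y \<longleftrightarrow> dual_feasible A w y \<and>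
     (\<forall>y'. dual_feasible A w y' \<longrightarrow>
        (\<Sum>i\<in>UNIV. real_of_int (b $ i) * y $ i) \<le> (\<Sum>i\<in>UNIV. real_of_int (b $ i) * y' $ i))"

definition totally_dual_padic :: "nat \<Rightarrow> int^'n^'m \<Rightarrow> int^'m \<Rightarrow> bool" where
  "totally_dual_padic p A b \<longleftrightarrow>
     (\<forall>w::int^'n. (\<exists>y. dual_optimal A b w y) \<longrightarrow> (\<exists>y. dual_optimal A b w y \<and> padic_vec p y))"

definition padic_gen_cone :: "nat \<Rightarrow> 'i set \<Rightarrow> ('i \<Rightarrow> real^'k) \<Rightarrow> bool" where
  "padic_gen_cone p I v \<longleftrightarrow>
     (\<forall>x. integral_vec x \<and> (\<exists>c. (\<forall>i\<in>I. c i \<ge> 0) \<and> x = (\<Sum>i\<in>I. c i *\<^sub>R v i)) \<longrightarrow>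
        (\<exists>c. (\<forall>i\<in>I. c i \<ge> 0 \<and> padic_rat p (c i)) \<and> x = (\<Sum>i\<in>I. c i *\<^sub>R v i)))"

definition padic_gen_subspace :: "nat \<Rightarrow> 'i set \<Rightarrow> ('i \<Rightarrow> real^'k) \<Rightarrow> bool" where
  "padic_gen_subspace p I v \<longleftrightarrow>
     (\<forall>x. integral_vec x \<and> x \<in> span (v ` I) \<longrightarrow>
        (\<exists>c. (\<forall>i\<in>I. padic_rat p (c i)) \<and> x = (\<Sum>i\<in>I. c i *\<^sub>R v i)))"

end

(*
  (1) => (2): a nonnegative combination w of the rows of A_F is the objective of a dual
  solution supported on A_F, which is optimal because it is complementary to every point
  of F.  A p-adic optimal solution exists by assumption, and by complementary slackness it
  is again supported on A_F.
  (2) => (3): adding a large integer multiple of the sum of the rows of A_F makes any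
  linear combination nonnegative.
  (3) => (1): let y be a dual optimal solution of maximal support.  By strict
  complementarity its support is exactly the set of implicit equalities of the optimal
  face F, so w = sum y_i a_i with y_i > 0 over A_F.  Multiply by q = p^k, round the
  coefficients down, and write the integral remainder sum frac(q y_i) a_i p-adically;
  since there are only finitely many such remainders, their p-adic coefficients are
  bounded, and for k large the rounded parts keep the coefficients positive.  Dividing
  by q gives a nonnegative p-adic dual solution supported on A_F, which is optimal.
*)

theory Submission
  imports Defs
begin

abbreviation real_of_int_vec :: "int^'n \<Rightarrow> real^'n" where
  "real_of_int_vec w \<equiv> \<chi> j. real_of_int (w $ j)"

abbreviation dual_value :: "int^'m \<Rightarrow> real^'m \<Rightarrow> real" where
  "dual_value b y \<equiv> \<Sum>i\<in>UNIV. real_of_int (b $ i) * y $ i"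

lemma padic_rat_of_int [simp]: "padic_rat p (real_of_int a)"
  unfolding padic_rat_def by (rule exI[of _ a], rule exI[of _ 0]) simp

lemma padic_rat_0 [simp]: "padic_rat p 0"
  using padic_rat_of_int[of p 0] by simp

lemma padic_rat_add:
  assumes "p > 0" "padic_rat p x" "padic_rat p y"
  shows "padic_rat p (x + y)"
proof -
  obtain a k where x: "x = real_of_int a / real p ^ k"
    using assms(2) unfolding padic_rat_def by blast
  obtain a' k' where y: "y = real_of_int a' / real p ^ k'"
    using assms(3) unfolding padic_rat_def by blast
  have "x + y = real_of_int (a * int p ^ k' + a' * int p ^ k) / real p ^ (k + k')"
    unfolding x y using assms(1) by (simp add: field_simps power_add)
  then show ?thesis unfolding padic_rat_def by blast
qed

lemma padic_rat_divide_power: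
  assumes "padic_rat p x"
  shows "padic_rat p (x / real p ^ k)"
proof -
  obtain a k' where "x = real_of_int a / real p ^ k'"
    using assms unfolding padic_rat_def by blast
  then have "x / real p ^ k = real_of_int a / real p ^ (k' + k)"
    by (simp add: power_add)
  then show ?thesis unfolding padic_rat_def by blast
qed

lemma integral_vec_of_int_vec [simp]: "integral_vec (real_of_int_vec w)"
  by (simp add: integral_vec_def)

lemma integral_vec_rowR [simp]: "integral_vec (rowR A i)"
  by (simp add: integral_vec_def rowR_def)

lemma integral_vec_iff: "integral_vec x \<longleftrightarrow> (\<exists>w. x = real_of_int_vec w)"
proof
  assume "integral_vec x"
  then have "x = real_of_int_vec (\<chi> j. \<lfloor>x $ j\<rfloor>)"
    by (auto simp: integral_vec_def vec_eq_iff elim: Ints_cases)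
  then show "\<exists>w. x = real_of_int_vec w" ..
qed auto

lemma integral_vec_add: "integral_vec x \<Longrightarrow> integral_vec y \<Longrightarrow> integral_vec (x + y)"
  by (simp add: integral_vec_def)

lemma integral_vec_scaleR: "c \<in> \<int> \<Longrightarrow> integral_vec x \<Longrightarrow> integral_vec (c *\<^sub>R x)"
  by (simp add: integral_vec_def)

lemma integral_vec_sum_scaleR:
  "(\<And>i. i \<in> I \<Longrightarrow> c i \<in> \<int>) \<Longrightarrow> (\<And>i. i \<in> I \<Longrightarrow> integral_vec (v i)) \<Longrightarrow>
    integral_vec (\<Sum>i\<in>I. c i *\<^sub>R v i)"
  by (auto simp: integral_vec_def sum_component intro!: Ints_sum Ints_mult)

lemma finite_bounded_integral_vecs:
  "finite {x::real^'n. integral_vec x \<and> (\<forall>j. \<bar>x $ j\<bar> \<le> B)}"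
proof -
  let ?T = "real_of_int ` {-\<lceil>B\<rceil>..\<lceil>B\<rceil>}"
  have "{x::real^'n. integral_vec x \<and> (\<forall>j. \<bar>x $ j\<bar> \<le> B)} \<subseteq> vec_lambda ` (UNIV \<rightarrow>\<^sub>E ?T)"
  proof
    fix x :: "real^'n" assume x: "x \<in> {x. integral_vec x \<and> (\<forall>j. \<bar>x $ j\<bar> \<le> B)}"
    have "x $ j \<in> ?T" for j
    proof -
      obtain a where a: "x $ j = real_of_int a"
        using x unfolding integral_vec_def by (blast elim: Ints_cases)
      moreover have "\<bar>x $ j\<bar> \<le> B" using x by blast
      ultimately have "a \<in> {-\<lceil>B\<rceil>..\<lceil>B\<rceil>}" by (simp add: abs_le_iff) linarith
      then show ?thesis using a by blast
    qed
    then have "(\<lambda>j. x $ j) \<in> UNIV \<rightarrow>\<^sub>E ?T" by (simp add: PiE_UNIV_domain)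
    then show "x \<in> vec_lambda ` (UNIV \<rightarrow>\<^sub>E ?T)" by (rule rev_image_eqI) simp
  qed
  then show ?thesis by (rule finite_subset) (intro finite_imageI finite_PiE; simp)
qed

lemma sum_UNIV_option:
  "(\<Sum>u\<in>UNIV. f u) = f None + (\<Sum>a\<in>UNIV. f (Some a))"
  for f :: "'a::finite option \<Rightarrow> 'b::comm_monoid_add"
  by (simp add: UNIV_option_conv sum.reindex)

lemma sum_UNIV_if_mem:
  "(\<Sum>i\<in>UNIV. (if i \<in> I then c i else 0) *\<^sub>R g i) = (\<Sum>i\<in>I. c i *\<^sub>R g i)"
  for g :: "'i::finite \<Rightarrow> 'a::real_vector"
  by (simp add: if_distrib[of "\<lambda>t. t *\<^sub>R _"] sum.If_cases Int_def)

lemma span_image_imp_sum: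
  fixes g :: "'i \<Rightarrow> 'a::real_vector"
  assumes "finite I" "x \<in> span (g ` I)"
  shows "\<exists>c. x = (\<Sum>i\<in>I. c i *\<^sub>R g i)"
  using assms(2)
proof (induct rule: span_induct_alt)
  case base
  show ?case by (rule exI[of _ "\<lambda>_. 0"]) simp
next
  case (step c x y)
  then obtain i d where i: "i \<in> I" "x = g i" and d: "y = (\<Sum>i\<in>I. d i *\<^sub>R g i)" by blast
  have "c *\<^sub>R x + y = (\<Sum>j\<in>I. (d j + (if j = i then c else 0)) *\<^sub>R g j)"
    using assms(1) i by (simp add: d scaleR_add_left sum.distrib if_distrib[of "\<lambda>t. t *\<^sub>R _"]
        cong: if_cong)
  then show ?case by (rule exI[of _ "\<lambda>j. d j + (if j = i then c else 0)"])
qed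

section \<open>Farkas' lemma\<close>

lemma convex_cone_hull_image_eq:
  fixes g :: "'i \<Rightarrow> 'a::real_vector"
  assumes "finite I"
  shows "convex_cone hull (g ` I) = {\<Sum>i\<in>I. c i *\<^sub>R g i | c. \<forall>i\<in>I. 0 \<le> c i}"
    (is "_ = ?C")
proof
  have "convex_cone ?C"
    unfolding convex_cone_iff
  proof (intro conjI ballI allI impI)
    show "0 \<in> ?C" by (intro CollectI exI[of _ "\<lambda>_. 0"]) simp
  next
    fix x y assume "x \<in> ?C" "y \<in> ?C"
    then obtain c d where "x = (\<Sum>i\<in>I. c i *\<^sub>R g i)" "\<forall>i\<in>I. 0 \<le> c i"
      and "y = (\<Sum>i\<in>I. d i *\<^sub>R g i)" "\<forall>i\<in>I. 0 \<le> d i" by blast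
    then show "x + y \<in> ?C"
      by (intro CollectI exI[of _ "\<lambda>i. c i + d i"]) (simp add: scaleR_add_left sum.distrib)
  next
    fix x and t :: real assume "x \<in> ?C" "0 \<le> t"
    then obtain c where "x = (\<Sum>i\<in>I. c i *\<^sub>R g i)" "\<forall>i\<in>I. 0 \<le> c i" by blast
    with \<open>0 \<le> t\<close> show "t *\<^sub>R x \<in> ?C"
      by (intro CollectI exI[of _ "\<lambda>i. t * c i"]) (simp add: scaleR_sum_right)
  qed
  moreover have "g ` I \<subseteq> ?C"
  proof
    fix x assume "x \<in> g ` I"
    then obtain i where "i \<in> I" "x = g i" by blast
    with assms show "x \<in> ?C"
      by (intro CollectI exI[of _ "\<lambda>j. if j = i then 1 else 0"])
        (simp add: if_distrib[of "\<lambda>t. t *\<^sub>R _"] cong: if_cong)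
  qed
  ultimately show "convex_cone hull (g ` I) \<subseteq> ?C" by (intro hull_minimal)
next
  show "?C \<subseteq> convex_cone hull (g ` I)"
  proof
    fix x assume "x \<in> ?C"
    then obtain c where x: "x = (\<Sum>i\<in>I. c i *\<^sub>R g i)" and c: "\<forall>i\<in>I. 0 \<le> c i" by blast
    have "(\<Sum>i\<in>J. c i *\<^sub>R g i) \<in> convex_cone hull (g ` I)" if "J \<subseteq> I" for J
      using finite_subset[OF that assms] that
      by (induction J rule: finite_induct)
        (use c in \<open>auto intro!: convex_cone_hull_add convex_cone_hull_mul[OF hull_inc]
            convex_cone_hull_contains_0\<close>)
    then show "x \<in> convex_cone hull (g ` I)" using x by blast
  qed
qed

lemma farkas_cone:
  fixes g :: "'i \<Rightarrow> 'a::euclidean_space"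
  assumes "finite I" and "\<nexists>c. (\<forall>i\<in>I. 0 \<le> c i) \<and> z = (\<Sum>i\<in>I. c i *\<^sub>R g i)"
  shows "\<exists>a. (\<forall>i\<in>I. a \<bullet> g i \<le> 0) \<and> a \<bullet> z > 0"
proof -
  let ?C = "convex_cone hull (g ` I)"
  have "z \<notin> ?C" using assms by (auto simp: convex_cone_hull_image_eq)
  moreover have "closed ?C" using assms(1) by (simp add: closed_convex_cone_hull)
  ultimately obtain a \<beta> where a: "a \<bullet> z < \<beta>" "\<forall>x\<in>?C. a \<bullet> x > \<beta>"
    using separating_hyperplane_closed_point[OF convex_convex_cone_hull] by blast
  have "\<beta> < 0" using a(2) convex_cone_hull_contains_0 by fastforce
  have "a \<bullet> g i \<ge> 0" if "i \<in> I" for i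
  proof (rule ccontr)
    assume neg: "\<not> a \<bullet> g i \<ge> 0"
    define t where "t = \<beta> / (a \<bullet> g i)"
    have "t \<ge> 0" using neg \<open>\<beta> < 0\<close> by (simp add: t_def divide_nonpos_neg)
    then have "t *\<^sub>R g i \<in> ?C" using that by (intro convex_cone_hull_mul hull_inc) auto
    then have "a \<bullet> (t *\<^sub>R g i) > \<beta>" using a(2) by blast
    moreover have "a \<bullet> (t *\<^sub>R g i) = \<beta>" using neg by (simp add: t_def)
    ultimately show False by simp
  qed
  then show ?thesis using a \<open>\<beta> < 0\<close> by (intro exI[of _ "- a"]) auto
qed

text \<open>The generator (0, 1) takes up the slack of the inequality on the right-hand sides.\<close>

lemma farkas_homogenised:
  fixes g :: "'j::finite \<Rightarrow> 'a::euclidean_space" and h :: "'j \<Rightarrow> real"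
  assumes "\<nexists>l. (\<forall>j. 0 \<le> l j) \<and> (\<Sum>j\<in>UNIV. l j *\<^sub>R g j) = c \<and> (\<Sum>j\<in>UNIV. l j * h j) \<le> \<delta>"
  shows "\<exists>x s. s \<le> 0 \<and> (\<forall>j. g j \<bullet> x + s * h j \<le> 0) \<and> c \<bullet> x + s * \<delta> > 0"
proof -
  define G where "G u = (case u of None \<Rightarrow> (0, 1) | Some j \<Rightarrow> (g j, h j))" for u
  have not_cone: "\<nexists>l. (\<forall>u\<in>UNIV. 0 \<le> l u) \<and> (c, \<delta>) = (\<Sum>u\<in>UNIV. l u *\<^sub>R G u)"
  proof
    assume "\<exists>l. (\<forall>u\<in>UNIV. 0 \<le> l u) \<and> (c, \<delta>) = (\<Sum>u\<in>UNIV. l u *\<^sub>R G u)"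
    then obtain l where l: "\<forall>u. 0 \<le> l u" "(c, \<delta>) = (\<Sum>u\<in>UNIV. l u *\<^sub>R G u)" by blast
    have "(c, \<delta>) = l None *\<^sub>R (0, 1) + (\<Sum>j\<in>UNIV. l (Some j) *\<^sub>R (g j, h j))"
      using l(2) by (simp add: sum_UNIV_option G_def)
    then have "(\<Sum>j\<in>UNIV. l (Some j) *\<^sub>R g j) = c" "(\<Sum>j\<in>UNIV. l (Some j) * h j) \<le> \<delta>"
      using l(1) by (simp_all add: prod_eq_iff fst_sum snd_sum)
    then show False using l(1) assms[unfolded not_ex, rule_format, of "\<lambda>j. l (Some j)"] by simp
  qed
  obtain a where a: "\<forall>u\<in>UNIV. a \<bullet> G u \<le> 0" "a \<bullet> (c, \<delta>) > 0"
    using farkas_cone[OF finite not_cone] by blast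
  obtain x s where a_eq: "a = (x, s)" by (cases a)
  have "s \<le> 0" using a(1)[rule_format, of None] by (simp add: a_eq G_def)
  moreover have "g j \<bullet> x + s * h j \<le> 0" for j
    using a(1)[rule_format, of "Some j"] by (simp add: a_eq G_def inner_commute)
  moreover have "c \<bullet> x + s * \<delta> > 0" using a(2) by (simp add: a_eq mult.commute inner_commute)
  ultimately show ?thesis by blast
qed

lemma farkas_infeasible:
  fixes g :: "'j::finite \<Rightarrow> 'a::euclidean_space"
  assumes "\<nexists>x. \<forall>j. g j \<bullet> x \<le> h j"
  shows "\<exists>l. (\<forall>j. 0 \<le> l j) \<and> (\<Sum>j\<in>UNIV. l j *\<^sub>R g j) = 0 \<and> (\<Sum>j\<in>UNIV. l j * h j) < 0"
proof (rule ccontr)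
  assume no_certificate: "\<not> ?thesis"
  have no_bounded_certificate:
    "\<nexists>l. (\<forall>j. 0 \<le> l j) \<and> (\<Sum>j\<in>UNIV. l j *\<^sub>R g j) = 0 \<and> (\<Sum>j\<in>UNIV. l j * h j) \<le> -1"
  proof
    assume "\<exists>l. (\<forall>j. 0 \<le> l j) \<and> (\<Sum>j\<in>UNIV. l j *\<^sub>R g j) = 0 \<and> (\<Sum>j\<in>UNIV. l j * h j) \<le> -1"
    then obtain l where "\<forall>j. 0 \<le> l j" "(\<Sum>j\<in>UNIV. l j *\<^sub>R g j) = 0" "(\<Sum>j\<in>UNIV. l j * h j) \<le> -1"
      by blast
    then show False using no_certificate[unfolded not_ex, rule_format, of l] by simp
  qed
  obtain x s where "s \<le> 0" and gx: "\<forall>j. g j \<bullet> x + s * h j \<le> 0" and "0 \<bullet> x + s * -1 > 0"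
    using farkas_homogenised[OF no_bounded_certificate] by blast
  then have "s < 0" by simp
  have "g j \<bullet> ((- 1 / s) *\<^sub>R x) \<le> h j" for j
    using gx[rule_format, of j] \<open>s < 0\<close> by (simp add: field_simps)
  then show False using assms by blast
qed

lemma farkas_affine:
  fixes g :: "'j::finite \<Rightarrow> 'a::euclidean_space"
  assumes feasible: "\<forall>j. g j \<bullet> x0 \<le> h j"
    and valid: "\<And>x. \<forall>j. g j \<bullet> x \<le> h j \<Longrightarrow> c \<bullet> x \<le> \<delta>"
  shows "\<exists>l. (\<forall>j. 0 \<le> l j) \<and> (\<Sum>j\<in>UNIV. l j *\<^sub>R g j) = c \<and> (\<Sum>j\<in>UNIV. l j * h j) \<le> \<delta>"
proof (rule ccontr)
  assume no_certificate: "\<not> ?thesis"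
  obtain x s where "s \<le> 0" and gx: "\<forall>j. g j \<bullet> x + s * h j \<le> 0" and cx: "c \<bullet> x + s * \<delta> > 0"
    using farkas_homogenised[OF no_certificate] by blast
  show False
  proof (cases "s = 0")
    case True
    \<comment> \<open>x is a recession direction of the feasible set along which c \<bullet> x is unbounded\<close>
    then have "c \<bullet> x > 0" using cx by simp
    define t where "t = \<bar>\<delta> - c \<bullet> x0\<bar> / (c \<bullet> x) + 1"
    have "t > 0" using \<open>c \<bullet> x > 0\<close> by (simp add: t_def add_nonneg_pos)
    have "g j \<bullet> (x0 + t *\<^sub>R x) \<le> h j" for j
    proof -
      have "t * (g j \<bullet> x) \<le> 0"
        using gx[rule_format, of j] True \<open>t > 0\<close> by (simp add: mult_nonneg_nonpos)
      then show ?thesis using feasible[rule_format, of j] by (simp add: inner_add_right)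
    qed
    moreover have "c \<bullet> (x0 + t *\<^sub>R x) > \<delta>"
      using \<open>c \<bullet> x > 0\<close> by (simp add: t_def inner_add_right distrib_right)
    ultimately show False using valid by (meson not_le)
  next
    case False
    then have "s < 0" using \<open>s \<le> 0\<close> by simp
    have "g j \<bullet> ((- 1 / s) *\<^sub>R x) \<le> h j" for j
      using gx[rule_format, of j] \<open>s < 0\<close> by (simp add: field_simps)
    moreover have "c \<bullet> ((- 1 / s) *\<^sub>R x) > \<delta>"
      using cx \<open>s < 0\<close> by (simp add: field_simps)
    ultimately show False using valid by (meson not_le)
  qed
qed

section \<open>Duality for the system Ax \<le> b\<close>

lemma dual_feasible_inner:
  assumes "dual_feasible A w y"
  shows "real_of_int_vec w \<bullet> x = (\<Sum>i\<in>UNIV. y $ i * (rowR A i \<bullet> x))"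
proof -
  have "real_of_int_vec w = (\<Sum>i\<in>UNIV. y $ i *\<^sub>R rowR A i)"
    using assms unfolding dual_feasible_def by simp
  then show ?thesis by (simp add: inner_sum_left)
qed

lemma weak_duality:
  assumes "dual_feasible A w y" "x \<in> polyP A b"
  shows "real_of_int_vec w \<bullet> x \<le> dual_value b y"
proof -
  have "real_of_int_vec w \<bullet> x = (\<Sum>i\<in>UNIV. y $ i * (rowR A i \<bullet> x))"
    using assms(1) by (rule dual_feasible_inner)
  also have "\<dots> \<le> (\<Sum>i\<in>UNIV. y $ i * real_of_int (b $ i))"
    using assms unfolding dual_feasible_def polyP_def by (intro sum_mono mult_left_mono) auto
  finally show ?thesis by (simp add: mult.commute)
qed

lemma complementary_slackness:
  assumes "dual_feasible A w y" "x \<in> polyP A b" "dual_value b y = real_of_int_vec w \<bullet> x"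
    and "y $ i \<noteq> 0"
  shows "rowR A i \<bullet> x = real_of_int (b $ i)"
proof -
  have "(\<Sum>k\<in>UNIV. y $ k * (real_of_int (b $ k) - rowR A k \<bullet> x)) = 0"
    using assms(3) dual_feasible_inner[OF assms(1)]
    by (simp add: sum_subtractf algebra_simps)
  moreover have "\<forall>k\<in>UNIV. 0 \<le> y $ k * (real_of_int (b $ k) - rowR A k \<bullet> x)"
    using assms(1,2) unfolding dual_feasible_def polyP_def by auto
  ultimately have "y $ i * (real_of_int (b $ i) - rowR A i \<bullet> x) = 0"
    by (simp add: sum_nonneg_eq_0_iff)
  then show ?thesis using assms(4) by simp
qed

lemma dual_value_if_tight:
  assumes "dual_feasible A w y" "\<And>i. y $ i \<noteq> 0 \<Longrightarrow> rowR A i \<bullet> x = real_of_int (b $ i)"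
  shows "dual_value b y = real_of_int_vec w \<bullet> x"
proof -
  have "dual_value b y = (\<Sum>i\<in>UNIV. y $ i * (rowR A i \<bullet> x))"
    by (intro sum.cong refl) (metis assms(2) mult.commute mult_zero_left mult_zero_right)
  then show ?thesis using dual_feasible_inner[OF assms(1)] by simp
qed

lemma dual_optimal_if_tight:
  assumes "dual_feasible A w y" "x \<in> polyP A b"
    and "\<And>i. y $ i \<noteq> 0 \<Longrightarrow> rowR A i \<bullet> x = real_of_int (b $ i)"
  shows "dual_optimal A b w y"
  using assms dual_value_if_tight[OF assms(1,3)] weak_duality[OF _ assms(2)]
  unfolding dual_optimal_def by auto

lemma dual_optimal_tight:
  assumes "dual_optimal A b w y" "dual_optimal A b w y'" "x \<in> polyP A b"
    and "\<And>i. y' $ i \<noteq> 0 \<Longrightarrow> rowR A i \<bullet> x = real_of_int (b $ i)" and "y $ i \<noteq> 0"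
  shows "rowR A i \<bullet> x = real_of_int (b $ i)"
proof -
  have "dual_value b y = dual_value b y'"
    using assms(1,2) unfolding dual_optimal_def by (meson order_antisym)
  also have "\<dots> = real_of_int_vec w \<bullet> x"
    using assms(2,4) unfolding dual_optimal_def by (intro dual_value_if_tight) auto
  finally show ?thesis
    using assms(1,3,5) unfolding dual_optimal_def by (intro complementary_slackness) auto
qed

lemma dual_optimal_perturb:
  assumes opt: "dual_optimal A b w y" and l: "\<forall>i. 0 \<le> l $ i" and "0 \<le> \<mu>"
    and comb: "(\<Sum>i\<in>UNIV. l $ i *\<^sub>R rowR A i) = \<mu> *\<^sub>R real_of_int_vec w"
  shows "\<mu> * dual_value b y \<le> dual_value b l"
    and "dual_value b l \<le> \<mu> * dual_value b y \<Longrightarrow>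
      dual_optimal A b w ((1 / (1 + \<mu>)) *\<^sub>R (y + l))"
proof -
  define y' where "y' = (1 / (1 + \<mu>)) *\<^sub>R (y + l)"
  have feas: "dual_feasible A w y" using opt by (simp add: dual_optimal_def)
  have "(\<Sum>i\<in>UNIV. y' $ i *\<^sub>R rowR A i) = (1 / (1 + \<mu>)) *\<^sub>R
      ((\<Sum>i\<in>UNIV. y $ i *\<^sub>R rowR A i) + (\<Sum>i\<in>UNIV. l $ i *\<^sub>R rowR A i))"
    by (simp add: y'_def scaleR_sum_right sum.distrib[symmetric] scaleR_add_left[symmetric])
  also have "\<dots> = (1 / (1 + \<mu>)) *\<^sub>R ((1 + \<mu>) *\<^sub>R real_of_int_vec w)"
    using feas comb by (simp add: dual_feasible_def scaleR_add_left)
  also have "\<dots> = real_of_int_vec w" using \<open>0 \<le> \<mu>\<close> by simp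
  finally have feas': "dual_feasible A w y'"
    using feas l \<open>0 \<le> \<mu>\<close> by (simp add: dual_feasible_def y'_def)
  have perturbed_value: "dual_value b y' = (dual_value b y + dual_value b l) / (1 + \<mu>)"
    by (simp add: y'_def sum_divide_distrib sum.distrib add_divide_distrib algebra_simps)
  have "dual_value b y \<le> dual_value b y'" using opt feas' by (simp add: dual_optimal_def)
  then show "\<mu> * dual_value b y \<le> dual_value b l"
    unfolding perturbed_value using \<open>0 \<le> \<mu>\<close> by (simp add: le_divide_eq algebra_simps)
  assume "dual_value b l \<le> \<mu> * dual_value b y"
  then have "dual_value b y' \<le> dual_value b y"
    unfolding perturbed_value using \<open>0 \<le> \<mu>\<close> by (simp add: divide_le_eq algebra_simps)
  then show "dual_optimal A b w y'"
    using opt feas' unfolding dual_optimal_def by fastforce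
qed

lemma dual_optimal_max_support:
  fixes A :: "int^'n^'m"
  assumes "dual_optimal A b w y"
  shows "\<exists>y0. dual_optimal A b w y0 \<and>
    (\<forall>y i. dual_optimal A b w y \<longrightarrow> y $ i \<noteq> 0 \<longrightarrow> y0 $ i \<noteq> 0)"
proof -
  define supp where "supp y = card {i. y $ i \<noteq> (0::real)}" for y :: "real^'m"
  have "supp y < CARD('m) + 1" for y
    unfolding supp_def by (simp add: card_mono less_Suc_eq_le)
  then obtain y0 where y0: "dual_optimal A b w y0"
    and max: "\<And>y. dual_optimal A b w y \<Longrightarrow> supp y \<le> supp y0"
    using ex_has_greatest_nat[of "dual_optimal A b w" y supp] assms by blast
  have "y0 $ i \<noteq> 0" if y: "dual_optimal A b w y" "y $ i \<noteq> 0" for y i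
  proof (rule ccontr)
    assume "\<not> y0 $ i \<noteq> 0"
    have nonneg: "\<forall>k. 0 \<le> y0 $ k" "\<forall>k. 0 \<le> y $ k"
      using y0 y by (auto simp: dual_optimal_def dual_feasible_def)
    have "dual_value b y \<le> 1 * dual_value b y0"
      using y y0 by (simp add: dual_optimal_def)
    moreover have "(\<Sum>k\<in>UNIV. y $ k *\<^sub>R rowR A k) = 1 *\<^sub>R real_of_int_vec w"
      using y by (simp add: dual_optimal_def dual_feasible_def)
    ultimately have "dual_optimal A b w ((1 / 2) *\<^sub>R (y0 + y))"
      using dual_optimal_perturb(2)[OF y0 nonneg(2), of 1] by simp
    moreover have "{k. y0 $ k \<noteq> 0} \<subset> {k. ((1 / 2) *\<^sub>R (y0 + y)) $ k \<noteq> 0}"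
      using nonneg y(2) \<open>\<not> y0 $ i \<noteq> 0\<close> by (force simp: add_nonneg_eq_0_iff)
    then have "supp y0 < supp ((1 / 2) *\<^sub>R (y0 + y))"
      unfolding supp_def by (intro psubset_card_mono) auto
    ultimately show False using max leD by blast
  qed
  then show ?thesis using y0 by blast
qed

section \<open>Strict complementarity\<close>

text \<open>The system Ax \<le> b, w x \<ge> \<beta>, whose extra row is indexed by None.\<close>

definition optimality_lhs :: "int^'n^'m \<Rightarrow> int^'n \<Rightarrow> 'm option \<Rightarrow> real^'n" where
  "optimality_lhs A w u = (case u of None \<Rightarrow> - real_of_int_vec w | Some i \<Rightarrow> rowR A i)"

definition optimality_rhs :: "int^'m \<Rightarrow> real \<Rightarrow> 'm option \<Rightarrow> real" where
  "optimality_rhs b \<beta> u = (case u of None \<Rightarrow> - \<beta> | Some i \<Rightarrow> real_of_int (b $ i))"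

lemma optimality_system_solutions:
  assumes "dual_feasible A w y"
  shows "{x. \<forall>u. optimality_lhs A w u \<bullet> x \<le> optimality_rhs b (dual_value b y) u} =
    polyP A b \<inter> {x. real_of_int_vec w \<bullet> x = dual_value b y}"
  using weak_duality[OF assms]
  by (force simp: optimality_lhs_def optimality_rhs_def polyP_def split_option_all)

lemma optimality_system_combination:
  "(\<Sum>u\<in>UNIV. l u *\<^sub>R optimality_lhs A w u) =
    (\<Sum>i\<in>UNIV. l (Some i) *\<^sub>R rowR A i) - l None *\<^sub>R real_of_int_vec w"
  "(\<Sum>u\<in>UNIV. l u * optimality_rhs b \<beta> u) = dual_value b (\<chi> i. l (Some i)) - l None * \<beta>"
  by (simp_all add: optimality_lhs_def optimality_rhs_def sum_UNIV_option mult.commute)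

lemma primal_optimum_attained:
  assumes opt: "dual_optimal A b w y"
  shows "polyP A b \<inter> {x. real_of_int_vec w \<bullet> x = dual_value b y} \<noteq> {}"
proof
  assume "polyP A b \<inter> {x. real_of_int_vec w \<bullet> x = dual_value b y} = {}"
  moreover have "dual_feasible A w y" using opt by (simp add: dual_optimal_def)
  ultimately obtain l where l: "\<forall>u. 0 \<le> l u" "(\<Sum>u\<in>UNIV. l u *\<^sub>R optimality_lhs A w u) = 0"
    "(\<Sum>u\<in>UNIV. l u * optimality_rhs b (dual_value b y) u) < 0"
    using farkas_infeasible[of "optimality_lhs A w" "optimality_rhs b (dual_value b y)"]
      optimality_system_solutions by blast
  have "l None * dual_value b y \<le> dual_value b (\<chi> i. l (Some i))"
    using l by (intro dual_optimal_perturb(1)[OF opt]) (auto simp: optimality_system_combination)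
  then show False using l(3) by (simp add: optimality_system_combination)
qed

text \<open>If every optimal point is tight at row i, affine Farkas turns this into a certificate;
  adding the i-th unit vector to it perturbs y0 into an optimal solution with positive i-th
  entry.\<close>

lemma strict_complementarity:
  assumes opt: "dual_optimal A b w y0"
    and max: "\<And>y i. dual_optimal A b w y \<Longrightarrow> y $ i \<noteq> 0 \<Longrightarrow> y0 $ i \<noteq> 0"
    and tight: "i \<in> implicit_eqs A b (polyP A b \<inter> {x. real_of_int_vec w \<bullet> x = dual_value b y0})"
  shows "y0 $ i \<noteq> 0"
proof -
  let ?g = "optimality_lhs A w" and ?h = "optimality_rhs b (dual_value b y0)"
  have feas: "dual_feasible A w y0" using opt by (simp add: dual_optimal_def)
  obtain x0 where "\<forall>u. ?g u \<bullet> x0 \<le> ?h u"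
    using primal_optimum_attained[OF opt] optimality_system_solutions[OF feas, where b = b] by blast
  moreover have "(- rowR A i) \<bullet> x \<le> - real_of_int (b $ i)" if "\<forall>u. ?g u \<bullet> x \<le> ?h u" for x
  proof -
    have "x \<in> polyP A b \<inter> {x. real_of_int_vec w \<bullet> x = dual_value b y0}"
      using that optimality_system_solutions[OF feas, where b = b] by blast
    then show ?thesis using tight by (simp add: implicit_eqs_def)
  qed
  ultimately obtain l where l: "\<forall>u. 0 \<le> l u" "(\<Sum>u\<in>UNIV. l u *\<^sub>R ?g u) = - rowR A i"
      "(\<Sum>u\<in>UNIV. l u * ?h u) \<le> - real_of_int (b $ i)"
    using farkas_affine[of ?g x0 ?h "- rowR A i" "- real_of_int (b $ i)"] by blast
  define l' where "l' = (\<chi> j. l (Some j) + (if j = i then 1 else 0))"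
  have "(\<Sum>j\<in>UNIV. l' $ j *\<^sub>R rowR A j) = (\<Sum>j\<in>UNIV. l (Some j) *\<^sub>R rowR A j) + rowR A i"
    by (simp add: l'_def scaleR_add_left sum.distrib if_distrib[of "\<lambda>t. t *\<^sub>R _"] cong: if_cong)
  then have "(\<Sum>j\<in>UNIV. l' $ j *\<^sub>R rowR A j) = l None *\<^sub>R real_of_int_vec w"
    using l(2) by (simp add: optimality_system_combination algebra_simps)
  moreover have "dual_value b l' = dual_value b (\<chi> j. l (Some j)) + real_of_int (b $ i)"
    by (simp add: l'_def distrib_left sum.distrib if_distrib[of "\<lambda>t. _ * t"] cong: if_cong)
  then have "dual_value b l' \<le> l None * dual_value b y0"
    using l(3) by (simp add: optimality_system_combination)
  moreover have "\<forall>j. 0 \<le> l' $ j" using l(1) by (simp add: l'_def)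
  ultimately have "dual_optimal A b w ((1 / (1 + l None)) *\<^sub>R (y0 + l'))"
    using dual_optimal_perturb(2)[OF opt] l(1) by blast
  moreover have "((1 / (1 + l None)) *\<^sub>R (y0 + l')) $ i > 0"
    using feas l(1) by (simp add: dual_feasible_def l'_def add_nonneg_pos add_pos_nonneg)
  ultimately show ?thesis using max by force
qed

lemma optimal_face:
  fixes A :: "int^'n^'m"
  assumes opt: "dual_optimal A b w y0"
    and max: "\<And>y i. dual_optimal A b w y \<Longrightarrow> y $ i \<noteq> 0 \<Longrightarrow> y0 $ i \<noteq> 0"
  defines "G \<equiv> polyP A b \<inter> {x. real_of_int_vec w \<bullet> x = dual_value b y0}"
  shows "G face_of polyP A b" and "G \<noteq> {}" and "implicit_eqs A b G = {i. y0 $ i \<noteq> 0}"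
proof -
  have feas: "dual_feasible A w y0" using opt by (simp add: dual_optimal_def)
  have "convex (polyP A b)"
    unfolding polyP_def by (simp add: convex_halfspace_le convex_INT[of UNIV, simplified] Collect_all_eq)
  then show "G face_of polyP A b"
    unfolding G_def by (rule face_of_Int_supporting_hyperplane_le) (use weak_duality[OF feas] in blast)
  show "G \<noteq> {}" unfolding G_def using opt by (rule primal_optimum_attained)
  show "implicit_eqs A b G = {i. y0 $ i \<noteq> 0}"
    using strict_complementarity[OF opt max] complementary_slackness[OF feas]
    by (auto simp: implicit_eqs_def G_def)
qed

section \<open>Rounding to p-adic coefficients\<close>

lemma finite_integral_unit_box_combinations:
  fixes v :: "'i \<Rightarrow> real^'k"
  shows "finite {\<Sum>i\<in>I. r i *\<^sub>R v i | r.
    (\<forall>i\<in>I. 0 \<le> r i \<and> r i \<le> 1) \<and> integral_vec (\<Sum>i\<in>I. r i *\<^sub>R v i)}"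
    (is "finite ?R")
proof -
  define B where "B = (\<Sum>i\<in>I. norm (v i))"
  have "?R \<subseteq> {x. integral_vec x \<and> (\<forall>j. \<bar>x $ j\<bar> \<le> B)}"
  proof
    fix x assume "x \<in> ?R"
    then obtain r where r: "\<forall>i\<in>I. 0 \<le> r i \<and> r i \<le> 1"
      and x: "x = (\<Sum>i\<in>I. r i *\<^sub>R v i)" and "integral_vec x"
      by blast
    have "\<bar>x $ j\<bar> \<le> B" for j
    proof -
      have "\<bar>x $ j\<bar> \<le> norm x" by (rule component_le_norm_cart)
      also have "\<dots> \<le> (\<Sum>i\<in>I. norm (r i *\<^sub>R v i))" unfolding x by (rule norm_sum)
      also have "\<dots> \<le> B"
        unfolding B_def using r by (intro sum_mono) (simp add: mult_left_le_one_le)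
      finally show ?thesis .
    qed
    then show "x \<in> {x. integral_vec x \<and> (\<forall>j. \<bar>x $ j\<bar> \<le> B)}" using \<open>integral_vec x\<close> by blast
  qed
  then show ?thesis using finite_bounded_integral_vecs finite_subset by blast
qed

lemma padic_gen_subspace_bounded_coeffs:
  fixes v :: "'i \<Rightarrow> real^'k"
  assumes I: "finite I" and gen: "padic_gen_subspace p I v"
  shows "\<exists>C. \<forall>r. (\<forall>i\<in>I. 0 \<le> r i \<and> r i \<le> 1) \<and> integral_vec (\<Sum>i\<in>I. r i *\<^sub>R v i) \<longrightarrow>
    (\<exists>c. (\<forall>i\<in>I. padic_rat p (c i) \<and> \<bar>c i\<bar> \<le> C) \<and>
      (\<Sum>i\<in>I. r i *\<^sub>R v i) = (\<Sum>i\<in>I. c i *\<^sub>R v i))"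
proof -
  define R where "R = {\<Sum>i\<in>I. r i *\<^sub>R v i | r.
    (\<forall>i\<in>I. 0 \<le> r i \<and> r i \<le> 1) \<and> integral_vec (\<Sum>i\<in>I. r i *\<^sub>R v i)}"
  have "finite R" unfolding R_def by (rule finite_integral_unit_box_combinations)
  have "(\<Sum>i\<in>I. r i *\<^sub>R v i) \<in> span (v ` I)" for r
    by (intro span_sum span_scale span_base) auto
  then have "\<forall>x\<in>R. \<exists>c. (\<forall>i\<in>I. padic_rat p (c i)) \<and> x = (\<Sum>i\<in>I. c i *\<^sub>R v i)"
    using gen unfolding padic_gen_subspace_def R_def by blast
  from bchoice[OF this] obtain cf
    where cf: "\<forall>x\<in>R. (\<forall>i\<in>I. padic_rat p (cf x i)) \<and> x = (\<Sum>i\<in>I. cf x i *\<^sub>R v i)"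
    by blast
  define C where "C = (\<Sum>x\<in>R. \<Sum>i\<in>I. \<bar>cf x i\<bar>)"
  have C: "\<bar>cf x i\<bar> \<le> C" if "x \<in> R" "i \<in> I" for x i
  proof -
    have "\<bar>cf x i\<bar> \<le> (\<Sum>i\<in>I. \<bar>cf x i\<bar>)" using I that by (intro member_le_sum) auto
    also have "\<dots> \<le> C" unfolding C_def using that \<open>finite R\<close>
      by (intro member_le_sum[of x R "\<lambda>x. \<Sum>i\<in>I. \<bar>cf x i\<bar>"]) (auto intro: sum_nonneg)
    finally show ?thesis .
  qed
  show ?thesis
  proof (intro exI[of _ C] allI impI)
    fix r assume r: "(\<forall>i\<in>I. 0 \<le> r i \<and> r i \<le> 1) \<and> integral_vec (\<Sum>i\<in>I. r i *\<^sub>R v i)"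
    then have "(\<Sum>i\<in>I. r i *\<^sub>R v i) \<in> R" unfolding R_def by blast
    then show "\<exists>c. (\<forall>i\<in>I. padic_rat p (c i) \<and> \<bar>c i\<bar> \<le> C) \<and>
        (\<Sum>i\<in>I. r i *\<^sub>R v i) = (\<Sum>i\<in>I. c i *\<^sub>R v i)"
      using cf C by (intro exI[of _ "cf (\<Sum>i\<in>I. r i *\<^sub>R v i)"]) blast
  qed
qed

lemma ex_power_mult_gt:
  fixes a :: real
  assumes "1 < a" "finite I" "\<And>i. i \<in> I \<Longrightarrow> 0 < y i"
  shows "\<exists>k. \<forall>i\<in>I. C < a ^ k * y i"
proof -
  obtain k where k: "(\<Sum>i\<in>I. \<bar>C\<bar> / y i) < a ^ k"
    using real_arch_pow[OF assms(1)] by blast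
  have "C < a ^ k * y i" if "i \<in> I" for i
  proof -
    have "\<bar>C\<bar> / y i \<le> (\<Sum>i\<in>I. \<bar>C\<bar> / y i)"
      using assms(2,3) that by (intro member_le_sum) (auto intro!: divide_nonneg_pos)
    then have "\<bar>C\<bar> / y i < a ^ k" using k by linarith
    then have "\<bar>C\<bar> < a ^ k * y i" using assms(3)[OF that] by (simp add: pos_divide_less_eq)
    then show ?thesis by linarith
  qed
  then show ?thesis by blast
qed

lemma padic_nonneg_combination_if_positive:
  fixes v :: "'i \<Rightarrow> real^'k"
  assumes "prime p" and I: "finite I" and gen: "padic_gen_subspace p I v"
    and v: "\<And>i. i \<in> I \<Longrightarrow> integral_vec (v i)" and x: "integral_vec x"
    and y: "\<And>i. i \<in> I \<Longrightarrow> 0 < y i" and xy: "x = (\<Sum>i\<in>I. y i *\<^sub>R v i)"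
  shows "\<exists>z. (\<forall>i\<in>I. 0 \<le> z i \<and> padic_rat p (z i)) \<and> x = (\<Sum>i\<in>I. z i *\<^sub>R v i)"
proof -
  have "p > 1" using assms(1) prime_gt_1_nat by blast
  obtain C where C: "\<And>r. (\<forall>i\<in>I. 0 \<le> r i \<and> r i \<le> 1) \<and> integral_vec (\<Sum>i\<in>I. r i *\<^sub>R v i) \<Longrightarrow>
      \<exists>c. (\<forall>i\<in>I. padic_rat p (c i) \<and> \<bar>c i\<bar> \<le> C) \<and> (\<Sum>i\<in>I. r i *\<^sub>R v i) = (\<Sum>i\<in>I. c i *\<^sub>R v i)"
    using padic_gen_subspace_bounded_coeffs[OF I gen] by blast
  have "\<exists>k. \<forall>i\<in>I. C + 1 < real p ^ k * y i"
    using \<open>p > 1\<close> I y by (intro ex_power_mult_gt) auto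
  then obtain k where large: "\<forall>i\<in>I. C + 1 < real p ^ k * y i" by blast
  define q where "q = real p ^ k"
  have "q > 0" using \<open>p > 1\<close> by (simp add: q_def)
  define u where "u i = \<lfloor>q * y i\<rfloor>" for i
  define r where "r i = q * y i - real_of_int (u i)" for i
  have r: "\<forall>i\<in>I. 0 \<le> r i \<and> r i \<le> 1"
    unfolding r_def u_def
    using of_int_floor_le real_of_int_floor_add_one_gt by (smt (verit))
  have "(\<Sum>i\<in>I. r i *\<^sub>R v i) = q *\<^sub>R x + (\<Sum>i\<in>I. real_of_int (- u i) *\<^sub>R v i)"
    by (simp add: r_def xy scaleR_diff_left sum_subtractf scaleR_sum_right sum_negf)
  moreover have "integral_vec (q *\<^sub>R x + (\<Sum>i\<in>I. real_of_int (- u i) *\<^sub>R v i))"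
    using x v by (intro integral_vec_add integral_vec_scaleR integral_vec_sum_scaleR) (auto simp: q_def)
  ultimately have "integral_vec (\<Sum>i\<in>I. r i *\<^sub>R v i)" by (simp only:)
  then obtain c where c: "\<forall>i\<in>I. padic_rat p (c i) \<and> \<bar>c i\<bar> \<le> C"
    "(\<Sum>i\<in>I. r i *\<^sub>R v i) = (\<Sum>i\<in>I. c i *\<^sub>R v i)"
    using C r by blast
  define z where "z i = (real_of_int (u i) + c i) / q" for i
  have "0 \<le> z i" if "i \<in> I" for i
  proof -
    have "q * y i < real_of_int (u i) + 1" unfolding u_def by (rule real_of_int_floor_add_one_gt)
    then show ?thesis using large c(1) that \<open>q > 0\<close> by (force simp: z_def q_def)
  qed
  moreover have "padic_rat p (z i)" if "i \<in> I" for i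
    unfolding z_def q_def using c(1) that \<open>p > 1\<close>
    by (intro padic_rat_divide_power padic_rat_add) auto
  moreover have "(\<Sum>i\<in>I. z i *\<^sub>R v i) = x"
  proof -
    have "(\<Sum>i\<in>I. z i *\<^sub>R v i) = (1 / q) *\<^sub>R ((\<Sum>i\<in>I. real_of_int (u i) *\<^sub>R v i) + (\<Sum>i\<in>I. c i *\<^sub>R v i))"
      by (simp add: z_def scaleR_sum_right sum.distrib[symmetric] scaleR_add_left[symmetric]
          add_divide_distrib)
    also have "\<dots> = (1 / q) *\<^sub>R (\<Sum>i\<in>I. (q * y i) *\<^sub>R v i)"
      by (simp add: c(2)[symmetric] r_def sum.distrib[symmetric] scaleR_add_left[symmetric])
    also have "\<dots> = x" using \<open>q > 0\<close> by (simp add: xy scaleR_sum_right)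
    finally show ?thesis .
  qed
  ultimately show ?thesis by blast
qed

lemma dual_optimal_supported:
  assumes "x0 \<in> polyP A b" and "\<forall>i\<in>I. 0 \<le> c i"
    and "\<And>i. i \<in> I \<Longrightarrow> rowR A i \<bullet> x0 = real_of_int (b $ i)"
    and "real_of_int_vec w = (\<Sum>i\<in>I. c i *\<^sub>R rowR A i)"
  shows "dual_optimal A b w (\<chi> i. if i \<in> I then c i else 0)"
  using assms by (intro dual_optimal_if_tight[of _ _ _ x0])
    (auto simp: dual_feasible_def sum_UNIV_if_mem split: if_splits)

lemma padic_gen_cone_if_totally_dual_padic:
  assumes tdp: "totally_dual_padic p A b" and F: "F face_of polyP A b" "F \<noteq> {}"
  shows "padic_gen_cone p (implicit_eqs A b F) (rowR A)"
  unfolding padic_gen_cone_def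
proof (intro allI impI)
  let ?I = "implicit_eqs A b F"
  fix x assume "integral_vec x \<and> (\<exists>c. (\<forall>i\<in>?I. 0 \<le> c i) \<and> x = (\<Sum>i\<in>?I. c i *\<^sub>R rowR A i))"
  then obtain w c where w: "x = real_of_int_vec w"
    and c: "\<forall>i\<in>?I. 0 \<le> c i" "x = (\<Sum>i\<in>?I. c i *\<^sub>R rowR A i)"
    using integral_vec_iff by blast
  have FP: "F \<subseteq> polyP A b" using F(1) face_of_imp_subset by blast
  obtain x0 where "x0 \<in> F" using F(2) by blast
  let ?y = "\<chi> i. if i \<in> ?I then c i else 0"
  have y_tight: "rowR A i \<bullet> x' = real_of_int (b $ i)" if "x' \<in> F" "?y $ i \<noteq> 0" for x' i
    using that by (auto simp: implicit_eqs_def split: if_splits)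
  have opt: "dual_optimal A b w ?y"
    using \<open>x0 \<in> F\<close> FP c w by (intro dual_optimal_supported) (auto simp: implicit_eqs_def)
  then obtain y' where y': "dual_optimal A b w y'" "padic_vec p y'"
    using tdp unfolding totally_dual_padic_def by blast
  have "i \<in> ?I" if "y' $ i \<noteq> 0" for i
    using dual_optimal_tight[OF y'(1) opt _ y_tight that] FP by (auto simp: implicit_eqs_def)
  then have "(\<Sum>i\<in>UNIV. y' $ i *\<^sub>R rowR A i) = (\<Sum>i\<in>?I. y' $ i *\<^sub>R rowR A i)"
    by (intro sum.mono_neutral_right) auto
  then have "x = (\<Sum>i\<in>?I. y' $ i *\<^sub>R rowR A i)"
    using y'(1) w by (simp add: dual_optimal_def dual_feasible_def)
  moreover have "\<forall>i\<in>?I. 0 \<le> y' $ i \<and> padic_rat p (y' $ i)"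
    using y' by (simp add: dual_optimal_def dual_feasible_def padic_vec_def)
  ultimately show "\<exists>c. (\<forall>i\<in>?I. 0 \<le> c i \<and> padic_rat p (c i)) \<and> x = (\<Sum>i\<in>?I. c i *\<^sub>R rowR A i)"
    by blast
qed

lemma padic_gen_subspace_if_padic_gen_cone:
  fixes v :: "'i \<Rightarrow> real^'k"
  assumes "p > 0" and I: "finite I" and v: "\<And>i. i \<in> I \<Longrightarrow> integral_vec (v i)"
    and cone: "padic_gen_cone p I v"
  shows "padic_gen_subspace p I v"
  unfolding padic_gen_subspace_def
proof (intro allI impI)
  fix x assume x: "integral_vec x \<and> x \<in> span (v ` I)"
  then obtain l where l: "x = (\<Sum>i\<in>I. l i *\<^sub>R v i)" using span_image_imp_sum[OF I] by blast
  define N where "N = \<lceil>\<Sum>i\<in>I. \<bar>l i\<bar>\<rceil>"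
  have N: "0 \<le> l i + real_of_int N" if "i \<in> I" for i
  proof -
    have "\<bar>l i\<bar> \<le> (\<Sum>i\<in>I. \<bar>l i\<bar>)" using I that by (intro member_le_sum) auto
    then show ?thesis unfolding N_def by linarith
  qed
  let ?x' = "x + (\<Sum>i\<in>I. real_of_int N *\<^sub>R v i)"
  have "integral_vec ?x'" using x v by (intro integral_vec_add integral_vec_sum_scaleR) auto
  moreover have "?x' = (\<Sum>i\<in>I. (l i + real_of_int N) *\<^sub>R v i)"
    by (simp add: l scaleR_add_left sum.distrib)
  then have "\<exists>c. (\<forall>i\<in>I. 0 \<le> c i) \<and> ?x' = (\<Sum>i\<in>I. c i *\<^sub>R v i)"
    using N by (intro exI[of _ "\<lambda>i. l i + real_of_int N"]) blast
  ultimately obtain c where c: "\<forall>i\<in>I. 0 \<le> c i \<and> padic_rat p (c i)" "?x' = (\<Sum>i\<in>I. c i *\<^sub>R v i)"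
    using cone unfolding padic_gen_cone_def by blast
  then have "x = (\<Sum>i\<in>I. (c i + real_of_int (- N)) *\<^sub>R v i)"
    by (simp add: scaleR_diff_left sum_subtractf eq_diff_eq[symmetric])
  moreover have "\<forall>i\<in>I. padic_rat p (c i + real_of_int (- N))"
    by (intro ballI padic_rat_add[OF \<open>p > 0\<close>] padic_rat_of_int) (use c(1) in blast)
  ultimately show "\<exists>c. (\<forall>i\<in>I. padic_rat p (c i)) \<and> x = (\<Sum>i\<in>I. c i *\<^sub>R v i)"
    by (intro exI[of _ "\<lambda>i. c i + real_of_int (- N)"]) blast
qed

lemma totally_dual_padic_if_padic_gen_subspace:
  fixes A :: "int^'n^'m"
  assumes "prime p"
    and gen: "\<And>F. F face_of polyP A b \<Longrightarrow> F \<noteq> {} \<Longrightarrow>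
      padic_gen_subspace p (implicit_eqs A b F) (rowR A)"
  shows "totally_dual_padic p A b"
  unfolding totally_dual_padic_def
proof (intro allI impI)
  fix w :: "int^'n" assume "\<exists>y. dual_optimal A b w y"
  then obtain y0 where y0: "dual_optimal A b w y0"
    and maximal: "\<And>y i. dual_optimal A b w y \<Longrightarrow> y $ i \<noteq> 0 \<Longrightarrow> y0 $ i \<noteq> 0"
    using dual_optimal_max_support by blast
  define G where "G = polyP A b \<inter> {x. real_of_int_vec w \<bullet> x = dual_value b y0}"
  have G: "G face_of polyP A b" "G \<noteq> {}" and I: "implicit_eqs A b G = {i. y0 $ i \<noteq> 0}"
    unfolding G_def using optimal_face[of A b w y0] y0 maximal by blast+
  let ?I = "implicit_eqs A b G"
  have pos: "0 < y0 $ i" if "i \<in> ?I" for i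
    using y0 I that by (force simp: dual_optimal_def dual_feasible_def less_le)
  have "real_of_int_vec w = (\<Sum>i\<in>UNIV. y0 $ i *\<^sub>R rowR A i)"
    using y0 by (simp add: dual_optimal_def dual_feasible_def)
  also have "\<dots> = (\<Sum>i\<in>?I. y0 $ i *\<^sub>R rowR A i)"
    using I by (intro sum.mono_neutral_right) auto
  finally have w_eq: "real_of_int_vec w = (\<Sum>i\<in>?I. y0 $ i *\<^sub>R rowR A i)" .
  have "\<exists>z. (\<forall>i\<in>?I. 0 \<le> z i \<and> padic_rat p (z i)) \<and>
      real_of_int_vec w = (\<Sum>i\<in>?I. z i *\<^sub>R rowR A i)"
    by (rule padic_nonneg_combination_if_positive[OF assms(1) finite gen[OF G] _ _ pos w_eq]) simp_all
  then obtain z where z: "\<forall>i\<in>?I. 0 \<le> z i \<and> padic_rat p (z i)"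
    "real_of_int_vec w = (\<Sum>i\<in>?I. z i *\<^sub>R rowR A i)"
    by blast
  obtain x0 where "x0 \<in> G" using G(2) by blast
  then have "x0 \<in> polyP A b" using face_of_imp_subset[OF G(1)] by blast
  then have "dual_optimal A b w (\<chi> i. if i \<in> ?I then z i else 0)"
    by (rule dual_optimal_supported[OF _ _ _ z(2)])
      (use z(1) \<open>x0 \<in> G\<close> in \<open>auto simp: implicit_eqs_def\<close>)
  moreover have "padic_vec p (\<chi> i. if i \<in> ?I then z i else 0)"
    using z by (simp add: padic_vec_def)
  ultimately show "\<exists>y. dual_optimal A b w y \<and> padic_vec p y" by blast
qed

theorem theorem1p1:
  fixes A :: "int^'n^'m" and b :: "int^'m" and p :: nat
  assumes "prime p"
  shows "(totally_dual_padic p A b \<longleftrightarrow>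
            (\<forall>F. F face_of polyP A b \<and> F \<noteq> {} \<longrightarrow>
                 padic_gen_cone p (implicit_eqs A b F) (rowR A)))
       \<and> (totally_dual_padic p A b \<longleftrightarrow>
            (\<forall>F. F face_of polyP A b \<and> F \<noteq> {} \<longrightarrow>
                 padic_gen_subspace p (implicit_eqs A b F) (rowR A)))"
proof -
  have "p > 0" using assms prime_gt_0_nat by blast
  let ?cone = "\<forall>F. F face_of polyP A b \<and> F \<noteq> {} \<longrightarrow>
    padic_gen_cone p (implicit_eqs A b F) (rowR A)"
  let ?subspace = "\<forall>F. F face_of polyP A b \<and> F \<noteq> {} \<longrightarrow>
    padic_gen_subspace p (implicit_eqs A b F) (rowR A)"
  have "totally_dual_padic p A b \<Longrightarrow> ?cone"
    using padic_gen_cone_if_totally_dual_padic by blast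
  moreover have "?cone \<Longrightarrow> ?subspace"
    using padic_gen_subspace_if_padic_gen_cone[where v = "rowR A", OF \<open>p > 0\<close> finite integral_vec_rowR]
    by blast
  moreover have "?subspace \<Longrightarrow> totally_dual_padic p A b"
    using totally_dual_padic_if_padic_gen_subspace[OF assms] by blast
  ultimately show ?thesis by blast
qed

end
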